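(* Let $F$ be a perfect field of characteristic $p>0$. Let $m>l\ge2$ be integers with $\gcd(l,m)=1$, and let $f,g,h,g^*,h^*\in F[x]$ be monic and original with $\deg g=\deg h^*=m$, $\deg h=\deg g^*=l$ and $f=g\circ h=g^*\circ h^*$. (1) The following are equivalent: (a) $f\in F[x^p]$; (b) $f'=0$; (c) $g'(g^* )'=0$. (2) If $g'=0$, then $p\nmid l$ and $(g^* )'\ne0$, and there exist positive integers $j,M$ and monic original $G,G^*,H^*\in F[x]$ such that $m=p^jM$, $\deg G=\deg H^*=M$, $\deg G^*=l$, $g=x^{p^j}\circ G$, $g^*\circ x^{p^j}=x^{p^j}\circ G^*$, $h^*=x^{p^j}\circ H^*$, $G'(G^* )'\ne0$, $G\circ h=G^*\circ H^*$, and $f=x^{p^j}\circ G\circ h=x^{p^j}\circ(G^*\circ H^* )$. In particular, if $M>l$ then $(l,M,G,h,G^*,H^* )$ satisfies: $M>l\ge 2$, $\gcd(l,M)=1$, $\deg G=\deg H^*=M$, $\deg h=\deg G^*=l$, $G'(G^* )'\ne 0$, $G\circ h=G^*\circ H^*$; if $2\le M<l$ then $(M,l,G^*,H^*,G,h)$ satisfies the analogous conditions ($l>M\ge2$, $\gcd(M,l)=1$, $\deg G^*=\deg h=l$, $\deg H^*=\deg G=M$, $(G^* )'G'\ne0$, $G^*\circ H^*=G\circ h$). If $M=1$, then $G$ and $H^*$ are linear. (3) If $(g^* )'=0$, then $p\nmid m$ and $g'\ne0$, and there exist positive integers $e,L$ and monic original $G,H,G^*\in F[x]$ with $l=p^eL$,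 $p\nmid L$, $g=\varphi_e(G)$, $h=x^{p^e}\circ H$, $g^*=x^{p^e}\circ G^*$, $G'(G^* )'\ne0$, $G\circ H=G^*\circ h^*$, and $f=x^{p^e}\circ G\circ H$. In particular, if $L\ge2$ then $(L,m,G,H,G^*,h^* )$ satisfies: $m>L\ge2$, $\gcd(L,m)=1$, $\deg G=\deg h^*=m$, $\deg H=\deg G^*=L$, $G'(G^* )'\ne0$, $G\circ H=G^*\circ h^*$. (4) The data derived in (2) and (3) are uniquely determined. Conversely, given such data, the stated formulas yield $(l,m,g,h,g^*,h^* )$ and $f$ that satisfy the degree conditions, the relation $f=g\circ h=g^*\circ h^*$, and the monic-original conditions above.
   Context: $g\circ h=g(h)$; monic means leading coefficient 1; original means $f(0)=0$; $f'$ is the formal derivative. For $j\ge0$, $\varphi_j:F[x]\to F[x]$ is the map applying $a\mapsto a^{p^j}$ to every coefficient (and fixing $x$); it is an $\mathbb{F}_p$-linear bijection since $F$ is perfect. *)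

theory Defs
  imports "HOL-Computational_Algebra.Polynomial"
begin

definition perfect_char_p :: "'a::field itself \<Rightarrow> bool" where
  "perfect_char_p _ \<longleftrightarrow> CHAR('a) > 0 \<and> (\<forall>a::'a. \<exists>b. b ^ CHAR('a) = a)"

definition monic :: "'a::comm_ring_1 poly \<Rightarrow> bool" where
  "monic f \<longleftrightarrow> lead_coeff f = 1"

definition original :: "'a::comm_ring_1 poly \<Rightarrow> bool" where
  "original f \<longleftrightarrow> poly f 0 = 0"

definition in_Fxp :: "nat \<Rightarrow> 'a::comm_ring_1 poly \<Rightarrow> bool" where
  "in_Fxp p f \<longleftrightarrow> (\<exists>q. f = pcompose q (monom 1 p))"

definition phi :: "nat \<Rightarrow> nat \<Rightarrow> 'a::comm_ring_1 poly \<Rightarrow> 'a poly" where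
  "phi p j f = map_poly (\<lambda>a. a ^ (p ^ j)) f"

abbreviation xpow :: "nat \<Rightarrow> 'a::comm_ring_1 poly" where
  "xpow n \<equiv> monom 1 n"

definition data2 :: "nat \<Rightarrow> nat \<Rightarrow> nat \<Rightarrow> 'a::field poly \<Rightarrow> 'a poly \<Rightarrow> 'a poly \<Rightarrow> 'a poly \<Rightarrow> 'a poly
    \<Rightarrow> nat \<Rightarrow> nat \<Rightarrow> 'a poly \<Rightarrow> 'a poly \<Rightarrow> 'a poly \<Rightarrow> bool" where
  "data2 p l m f g h gs hs j M G Gs Hs \<longleftrightarrow>
     j > 0 \<and> M > 0 \<and>
     monic G \<and> original G \<and> monic Gs \<and> original Gs \<and> monic Hs \<and> original Hs \<and>
     m = p ^ j * M \<and> degree G = M \<and> degree Hs = M \<and> degree Gs = l \<and>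
     g = pcompose (xpow (p ^ j)) G \<and>
     pcompose gs (xpow (p ^ j)) = pcompose (xpow (p ^ j)) Gs \<and>
     hs = pcompose (xpow (p ^ j)) Hs \<and>
     pderiv G * pderiv Gs \<noteq> 0 \<and>
     pcompose G h = pcompose Gs Hs \<and>
     f = pcompose (xpow (p ^ j)) (pcompose G h) \<and>
     f = pcompose (xpow (p ^ j)) (pcompose Gs Hs)"

definition data3 :: "nat \<Rightarrow> nat \<Rightarrow> nat \<Rightarrow> 'a::field poly \<Rightarrow> 'a poly \<Rightarrow> 'a poly \<Rightarrow> 'a poly \<Rightarrow> 'a poly
    \<Rightarrow> nat \<Rightarrow> nat \<Rightarrow> 'a poly \<Rightarrow> 'a poly \<Rightarrow> 'a poly \<Rightarrow> bool" where
  "data3 p l m f g h gs hs e L G H Gs \<longleftrightarrow>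
     e > 0 \<and> L > 0 \<and>
     monic G \<and> original G \<and> monic H \<and> original H \<and> monic Gs \<and> original Gs \<and>
     l = p ^ e * L \<and> \<not> p dvd L \<and>
     g = phi p e G \<and>
     h = pcompose (xpow (p ^ e)) H \<and>
     gs = pcompose (xpow (p ^ e)) Gs \<and>
     pderiv G * pderiv Gs \<noteq> 0 \<and>
     pcompose G H = pcompose Gs hs \<and>
     f = pcompose (xpow (p ^ e)) (pcompose G H)"

end

theory Submission
  imports Defs "HOL-Computational_Algebra.Primes"
begin

text \<open>
  Over a perfect field of characteristic p, a polynomial with vanishing derivative lies in F[x^p]
  and hence, taking p-th roots of its coefficients, is a p-th power; so every nonconstant
  polynomial is uniquely G^(p^k) with G' \<noteq> 0. By the chain rule f' = (g' o h) h' = (g*' o h*) h*',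
  and as p cannot divide both of the coprime degrees l and m, g' and g*' do not both vanish and
  f' = 0 exactly when one of them does. If g' = 0, write g = G^(p^j): then g* o h* is a p^j-th
  power, and since g*' \<noteq> 0 the chain rule forces h*' = 0, so h* = H*^(p^j) and, extracting
  coefficient roots once more, g* = phi_j(G*) with G o h = G* o H*. The case g*' = 0 is
  symmetric, and there a degree count in the differentiated identity G o H = G* o h* shows that
  p does not divide L. Uniqueness comes from injectivity of the Frobenius map.
\<close>

lemma perfect_char_pD:
  assumes "perfect_char_p TYPE('a::field)"
  shows "CHAR('a) > 0" "\<exists>b. b ^ CHAR('a) = (a::'a)"
  using assms by (auto simp: perfect_char_p_def)

lemma pcompose_xpow: "pcompose (xpow n) q = q ^ n"
  by (induction n) (simp_all add: monom_Suc pcompose_pCons monom_0 pcompose_1 one_pCons)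

lemma pcompose_power: "pcompose (p ^ n) q = pcompose p q ^ n"
  by (induction n) (simp_all add: pcompose_mult pcompose_1)

lemma coeff_pcompose_xpow:
  assumes "n > 0"
  shows "coeff (pcompose Q (xpow n)) i = (if n dvd i then coeff Q (i div n) else 0)"
proof (induction Q arbitrary: i)
  case (pCons a Q)
  consider "i = 0" | "0 < i" "i < n" | "n \<le> i" by linarith
  then show ?case
  proof cases
    case 1
    with assms show ?thesis by (simp add: pcompose_pCons coeff_monom_mult)
  next
    case 2
    then have "\<not> n dvd i" by (auto dest: dvd_imp_le)
    with 2 show ?thesis by (simp add: pcompose_pCons coeff_monom_mult coeff_pCons split: nat.split)
  next
    case 3
    with assms show ?thesis
      by (simp add: pcompose_pCons coeff_monom_mult coeff_pCons pCons.IH dvd_minus_self le_div_geq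
          split: nat.split)
  qed
qed simp

lemma power_char_power_eq_iff:
  fixes x y :: "'a::idom"
  assumes "CHAR('a) > 0"
  shows "x ^ (CHAR('a) ^ k) = y ^ (CHAR('a) ^ k) \<longleftrightarrow> x = y"
proof
  assume eq: "x ^ (CHAR('a) ^ k) = y ^ (CHAR('a) ^ k)"
  have "(x - y) ^ (CHAR('a) ^ k) = x ^ (CHAR('a) ^ k) - y ^ (CHAR('a) ^ k)"
    using freshmans_dream'[OF prime_CHAR_semidom[OF assms], of "CHAR('a) ^ k" k "x - y" y]
    by (simp add: algebra_simps)
  with eq show "x = y" by simp
qed simp

lemmas poly_power_char_power_eq_iff =
  power_char_power_eq_iff[where 'a = "'a::idom poly", unfolded semiring_char_poly]

lemma coeff_phi: "p > 0 \<Longrightarrow> coeff (phi p k (P::'a::idom poly)) i = coeff P i ^ (p ^ k)"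
  by (simp add: phi_def coeff_map_poly power_0_left)

lemma degree_phi: "p > 0 \<Longrightarrow> degree (phi p k (P::'a::idom poly)) = degree P"
  unfolding phi_def by (rule degree_map_poly) simp

lemma phi_phi: "p > 0 \<Longrightarrow> phi p j (phi p k (P::'a::idom poly)) = phi p (j + k) P"
  by (intro poly_eqI) (simp add: coeff_phi power_add ac_simps flip: power_mult)

lemma phi_eq_iff:
  fixes P Q :: "'a::idom poly"
  assumes "CHAR('a) > 0"
  shows "phi CHAR('a) k P = phi CHAR('a) k Q \<longleftrightarrow> P = Q"
  using assms by (simp add: poly_eq_iff coeff_phi power_char_power_eq_iff)

lemma pderiv_phi_eq_0_iff: "p > 0 \<Longrightarrow> pderiv (phi p k (P::'a::idom poly)) = 0 \<longleftrightarrow> pderiv P = 0"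
  by (simp add: poly_eq_iff coeff_pderiv coeff_phi)

lemma monic_phi_iff:
  fixes P :: "'a::idom poly"
  assumes "CHAR('a) > 0"
  shows "monic (phi CHAR('a) k P) \<longleftrightarrow> monic P"
  using assms power_char_power_eq_iff[OF assms, of "lead_coeff P" k 1]
  by (simp add: monic_def degree_phi coeff_phi)

lemma original_phi_iff: "p > 0 \<Longrightarrow> original (phi p k (P::'a::idom poly)) \<longleftrightarrow> original P"
  by (simp add: original_def poly_0_coeff_0 coeff_phi)

lemma ex_phi_preimage:
  fixes P :: "'a::field poly"
  assumes "perfect_char_p TYPE('a)"
  shows "\<exists>Q. P = phi CHAR('a) k Q"
proof -
  have root: "\<exists>b. b ^ (CHAR('a) ^ k) = a" for a :: 'a
  proof (induction k arbitrary: a)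
    case (Suc k)
    obtain b where "b ^ (CHAR('a) ^ k) = a" using Suc by blast
    moreover obtain c where "c ^ CHAR('a) = b" using perfect_char_pD(2)[OF assms] by blast
    ultimately show ?case by (metis power_mult power_Suc)
  qed auto
  obtain r where r: "\<And>a::'a. r a ^ (CHAR('a) ^ k) = a" using root by metis
  have "r 0 = 0" using r[of 0] by simp
  then have "P = phi CHAR('a) k (map_poly r P)"
    using perfect_char_pD(1)[OF assms] by (intro poly_eqI) (simp add: coeff_phi coeff_map_poly r)
  then show ?thesis by blast
qed

lemma power_char_power_eq_pcompose_phi:
  fixes P :: "'a::idom poly"
  assumes "CHAR('a) > 0"
  shows "P ^ (CHAR('a) ^ k) = pcompose (phi CHAR('a) k P) (xpow (CHAR('a) ^ k))"
proof (induction P)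
  case (pCons a P)
  have "pCons a P = [:a:] + xpow 1 * P"
    by (simp add: monom_Suc monom_0 pCons_one)
  then have "pCons a P ^ (CHAR('a) ^ k) = [:a:] ^ (CHAR('a) ^ k) + (xpow 1 * P) ^ (CHAR('a) ^ k)"
    using freshmans_dream'[where 'a = "'a poly", of "CHAR('a) ^ k" k] prime_CHAR_semidom[OF assms]
    by simp
  also have "\<dots> = pcompose (phi CHAR('a) k (pCons a P)) (xpow (CHAR('a) ^ k))"
    using assms pCons
    by (simp add: power_mult_distrib monom_power poly_const_pow phi_def map_poly_pCons
        pcompose_pCons)
  finally show ?case .
qed (use assms in \<open>simp add: phi_def\<close>)

lemma pcompose_phi_power:
  fixes A B :: "'a::idom poly"
  assumes "CHAR('a) > 0"
  shows "pcompose (phi CHAR('a) k A) (B ^ (CHAR('a) ^ k)) = pcompose A B ^ (CHAR('a) ^ k)"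
proof -
  have "pcompose (phi CHAR('a) k A) (B ^ (CHAR('a) ^ k))
      = pcompose (pcompose (phi CHAR('a) k A) (xpow (CHAR('a) ^ k))) B"
    by (simp flip: pcompose_assoc add: pcompose_xpow)
  also have "\<dots> = pcompose A B ^ (CHAR('a) ^ k)"
    by (simp flip: power_char_power_eq_pcompose_phi[OF assms] add: pcompose_power)
  finally show ?thesis .
qed

lemma pderiv_eq_0_iff_char_dvd_coeffs:
  "pderiv (P::'a::idom poly) = 0 \<longleftrightarrow> (\<forall>i. coeff P i \<noteq> 0 \<longrightarrow> CHAR('a) dvd i)"
proof -
  have "pderiv P = 0 \<longleftrightarrow> (\<forall>n. coeff P (Suc n) \<noteq> 0 \<longrightarrow> CHAR('a) dvd Suc n)"
    by (auto simp: poly_eq_iff coeff_pderiv of_nat_eq_0_iff_char_dvd simp del: of_nat_Suc)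
  also have "\<dots> \<longleftrightarrow> (\<forall>i. coeff P i \<noteq> 0 \<longrightarrow> CHAR('a) dvd i)"
    by (metis dvd_0_right not0_implies_Suc)
  finally show ?thesis .
qed

lemma char_dvd_degree_if_pderiv_eq_0:
  "pderiv (P::'a::idom poly) = 0 \<Longrightarrow> CHAR('a) dvd degree P"
  by (cases "P = 0") (auto simp: pderiv_eq_0_iff_char_dvd_coeffs)

lemma pderiv_power_char_power:
  "k > 0 \<Longrightarrow> pderiv (Q ^ (CHAR('a) ^ k) :: 'a::idom poly) = 0"
  by (simp add: pderiv_power of_nat_eq_0_iff_char_dvd)

lemma degree_pderiv_le: "degree (pderiv P) \<le> degree P - 1"
  by (rule degree_le) (auto simp: coeff_pderiv coeff_eq_0)

lemma degree_pderiv_if_not_char_dvd: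
  assumes "\<not> CHAR('a) dvd degree (P::'a::idom poly)"
  shows "degree (pderiv P) = degree P - 1"
proof (rule antisym[OF degree_pderiv_le le_degree])
  have "degree P > 0" using assms by (metis dvd_0_right gr0I)
  then have "coeff (pderiv P) (degree P - 1) = of_nat (degree P) * lead_coeff P"
    by (simp add: coeff_pderiv)
  also have "\<dots> \<noteq> 0" using assms by (auto simp: of_nat_eq_0_iff_char_dvd)
  finally show "coeff (pderiv P) (degree P - 1) \<noteq> 0" .
qed

lemma in_Fxp_iff_pderiv_eq_0:
  fixes P :: "'a::idom poly"
  assumes "CHAR('a) > 0"
  shows "in_Fxp CHAR('a) P \<longleftrightarrow> pderiv P = 0"
proof
  assume "in_Fxp CHAR('a) P"
  then show "pderiv P = 0" by (auto simp: in_Fxp_def pderiv_pcompose pderiv_monom)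
next
  assume "pderiv P = 0"
  define R where "R = (\<Sum>i\<le>degree P. monom (coeff P (i * CHAR('a))) i)"
  have coeff_R: "coeff R i = coeff P (i * CHAR('a))" for i
  proof (cases "i \<le> degree P")
    case False
    moreover have "i \<le> i * CHAR('a)" using assms by simp
    ultimately have "coeff P (i * CHAR('a)) = 0" by (intro coeff_eq_0) linarith
    with False show ?thesis by (simp add: R_def coeff_sum)
  qed (simp add: R_def coeff_sum)
  have "P = pcompose R (xpow CHAR('a))"
  proof (rule poly_eqI)
    fix i
    show "coeff P i = coeff (pcompose R (xpow CHAR('a))) i"
      using \<open>pderiv P = 0\<close> assms
      by (auto simp: coeff_pcompose_xpow coeff_R pderiv_eq_0_iff_char_dvd_coeffs)
  qed
  then show "in_Fxp CHAR('a) P" by (auto simp: in_Fxp_def)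
qed

lemma pderiv_eq_0_imp_power_char:
  fixes P :: "'a::field poly"
  assumes "perfect_char_p TYPE('a)" "pderiv P = 0"
  shows "\<exists>Q. P = Q ^ CHAR('a)"
proof -
  note char_pos = perfect_char_pD(1)[OF assms(1)]
  obtain R where "P = pcompose R (xpow CHAR('a))"
    using in_Fxp_iff_pderiv_eq_0[OF char_pos] assms(2) by (auto simp: in_Fxp_def)
  moreover obtain Q where "R = phi CHAR('a) 1 Q" using ex_phi_preimage[OF assms(1)] by blast
  ultimately have "P = Q ^ (CHAR('a) ^ 1)"
    using power_char_power_eq_pcompose_phi[OF char_pos, of Q 1] by simp
  then show ?thesis by auto
qed

lemma degree_power: "degree ((P::'a::idom poly) ^ n) = n * degree P"
  by (cases "P = 0") (simp_all add: degree_power_eq power_0_left)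

lemma power_char_power_decomposition:
  fixes P :: "'a::field poly"
  assumes "perfect_char_p TYPE('a)" "degree P > 0"
  shows "\<exists>k G. P = G ^ (CHAR('a) ^ k) \<and> pderiv G \<noteq> 0"
  using assms(2)
proof (induction "degree P" arbitrary: P rule: less_induct)
  case less
  show ?case
  proof (cases "pderiv P = 0")
    case False
    then show ?thesis by (intro exI[of _ 0] exI[of _ P]) simp
  next
    case True
    then obtain Q where Q: "P = Q ^ CHAR('a)"
      using pderiv_eq_0_imp_power_char[OF assms(1)] by blast
    have "CHAR('a) > 1"
      using prime_CHAR_semidom[OF perfect_char_pD(1)[OF assms(1)]] by (rule prime_gt_1_nat)
    moreover have "degree P = CHAR('a) * degree Q" using Q by (simp add: degree_power)
    ultimately have "degree Q > 0" "degree Q < degree P" using less.prems by auto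
    then obtain k G where "Q = G ^ (CHAR('a) ^ k)" "pderiv G \<noteq> 0" using less.hyps by blast
    with Q have "P = G ^ (CHAR('a) ^ Suc k) \<and> pderiv G \<noteq> 0"
      by (simp add: mult.commute flip: power_mult)
    then show ?thesis by blast
  qed
qed

lemma power_char_power_decomposition_unique:
  fixes G G' :: "'a::idom poly"
  assumes "CHAR('a) > 0" "G ^ (CHAR('a) ^ j) = G' ^ (CHAR('a) ^ j')"
    and "pderiv G \<noteq> 0" "pderiv G' \<noteq> 0"
  shows "j = j' \<and> G = G'"
proof -
  have *: "j = j' \<and> G = G'"
    if eq: "G ^ (CHAR('a) ^ j) = G' ^ (CHAR('a) ^ j')" and "pderiv G \<noteq> 0" "j \<le> j'"
    for j j' and G G' :: "'a poly"
  proof -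
    have "G' ^ (CHAR('a) ^ j') = (G' ^ (CHAR('a) ^ (j' - j))) ^ (CHAR('a) ^ j)"
      using \<open>j \<le> j'\<close> by (simp flip: power_mult power_add)
    with eq have "G ^ (CHAR('a) ^ j) = (G' ^ (CHAR('a) ^ (j' - j))) ^ (CHAR('a) ^ j)" by simp
    then have "G = G' ^ (CHAR('a) ^ (j' - j))"
      by (simp only: poly_power_char_power_eq_iff[OF assms(1)])
    with \<open>pderiv G \<noteq> 0\<close> have "j' - j = 0" using pderiv_power_char_power by blast
    with \<open>G = _\<close> \<open>j \<le> j'\<close> show ?thesis by simp
  qed
  show ?thesis
  proof (cases "j \<le> j'")
    case True
    then show ?thesis using *[OF assms(2,3)] by blast
  next
    case False
    then show ?thesis using *[OF assms(2)[symmetric] assms(4)] by auto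
  qed
qed

lemma pcompose_eq_power_char:
  fixes A B C :: "'a::field poly"
  assumes "perfect_char_p TYPE('a)" "pcompose A B = C ^ CHAR('a)" "pderiv A \<noteq> 0" "degree B > 0"
  shows "\<exists>A1 B1. A = phi CHAR('a) 1 A1 \<and> B = B1 ^ CHAR('a) \<and> pcompose A1 B1 = C \<and> pderiv A1 \<noteq> 0"
proof -
  note char_pos = perfect_char_pD(1)[OF assms(1)]
  have "pcompose (pderiv A) B * pderiv B = 0"
    using assms(2) pderiv_power_char_power[of 1 C] by (simp flip: pderiv_pcompose)
  moreover have "pcompose (pderiv A) B \<noteq> 0" using assms(3,4) pcompose_eq_0 by blast
  ultimately obtain B1 where B1: "B = B1 ^ CHAR('a)"
    using pderiv_eq_0_imp_power_char[OF assms(1)] by auto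
  obtain A1 where A1: "A = phi CHAR('a) 1 A1" using ex_phi_preimage[OF assms(1)] by blast
  have "pcompose A1 B1 ^ (CHAR('a) ^ 1) = C ^ (CHAR('a) ^ 1)"
    using pcompose_phi_power[OF char_pos, of 1 A1 B1] A1 B1 assms(2) by simp
  then have "pcompose A1 B1 = C" using poly_power_char_power_eq_iff[OF char_pos] by blast
  moreover have "pderiv A1 \<noteq> 0" using A1 assms(3) char_pos pderiv_phi_eq_0_iff by blast
  ultimately show ?thesis using A1 B1 by blast
qed

lemma pcompose_eq_power_char_power:
  fixes A B C :: "'a::field poly"
  assumes "perfect_char_p TYPE('a)" "pcompose A B = C ^ (CHAR('a) ^ k)"
    and "pderiv A \<noteq> 0" "degree B > 0"
  shows "\<exists>A1 B1. A = phi CHAR('a) k A1 \<and> B = B1 ^ (CHAR('a) ^ k) \<and> pcompose A1 B1 = C \<and>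
      pderiv A1 \<noteq> 0"
  using assms(2-4)
proof (induction k arbitrary: A B)
  case 0
  then show ?case by (intro exI[of _ A] exI[of _ B]) (simp add: phi_def)
next
  case (Suc k)
  note char_pos = perfect_char_pD(1)[OF assms(1)]
  have "pcompose A B = (C ^ (CHAR('a) ^ k)) ^ CHAR('a)"
    using Suc.prems(1) by (simp add: mult.commute flip: power_mult)
  then obtain A1 B1 where A1: "A = phi CHAR('a) 1 A1" and B1: "B = B1 ^ CHAR('a)"
    and "pcompose A1 B1 = C ^ (CHAR('a) ^ k)" and "pderiv A1 \<noteq> 0"
    using pcompose_eq_power_char[OF assms(1)] Suc.prems by blast
  moreover have "degree B1 > 0" using B1 Suc.prems(3) by (simp add: degree_power)
  ultimately obtain A2 B2 where "A1 = phi CHAR('a) k A2" "B1 = B2 ^ (CHAR('a) ^ k)"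
    "pcompose A2 B2 = C" "pderiv A2 \<noteq> 0"
    using Suc.IH by blast
  moreover have "A = phi CHAR('a) (Suc k) A2" using A1 \<open>A1 = _\<close> char_pos by (simp add: phi_phi)
  moreover have "B = B2 ^ (CHAR('a) ^ Suc k)"
    using B1 \<open>B1 = _\<close> by (simp add: ac_simps flip: power_mult)
  ultimately show ?case by blast
qed

lemma not_char_dvd_degree_right_factor:
  fixes G H Gs Hs :: "'a::idom poly"
  assumes comp: "pcompose G H = pcompose Gs Hs"
    and deg: "degree G = m" "degree Hs = m" "degree H = L"
    and "\<not> CHAR('a) dvd m" "0 < L" "L < m" "pderiv Gs \<noteq> 0"
  shows "\<not> CHAR('a) dvd L"
proof
  assume "CHAR('a) dvd L"
  define k where "k = degree (pderiv H)"
  define d where "d = degree (pderiv Gs)"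
  have chain: "pcompose (pderiv G) H * pderiv H = pcompose (pderiv Gs) Hs * pderiv Hs"
    using arg_cong[OF comp, of pderiv] by (simp add: pderiv_pcompose)
  have "pderiv Hs \<noteq> 0"
    using char_dvd_degree_if_pderiv_eq_0[of Hs] deg(2) \<open>\<not> CHAR('a) dvd m\<close> by blast
  moreover have "pcompose (pderiv Gs) Hs \<noteq> 0"
    using pcompose_eq_0[of "pderiv Gs" Hs] \<open>pderiv Gs \<noteq> 0\<close> deg(2) \<open>L < m\<close> by auto
  ultimately have rhs: "pcompose (pderiv Gs) Hs * pderiv Hs \<noteq> 0" by simp
  with chain have "pcompose (pderiv G) H \<noteq> 0" "pderiv H \<noteq> 0" by auto
  then have "degree (pcompose (pderiv G) H * pderiv H) = (m - 1) * L + k"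
    using deg \<open>\<not> CHAR('a) dvd m\<close>
    by (simp add: degree_mult_eq degree_pcompose degree_pderiv_if_not_char_dvd k_def)
  moreover have "degree (pcompose (pderiv Gs) Hs * pderiv Hs) = d * m + (m - 1)"
    using rhs deg \<open>\<not> CHAR('a) dvd m\<close>
    by (simp add: degree_mult_eq degree_pcompose degree_pderiv_if_not_char_dvd d_def)
  ultimately have degs: "(m - 1) * L + k = d * m + (m - 1)" using chain by simp
  have "coeff (pderiv H) (L - 1) = of_nat L * coeff H L"
    using \<open>0 < L\<close> by (simp add: coeff_pderiv)
  also have "\<dots> = 0" using \<open>CHAR('a) dvd L\<close> by (simp add: of_nat_eq_0_iff_char_dvd)
  finally have "k \<noteq> L - 1" using \<open>pderiv H \<noteq> 0\<close> k_def by (metis leading_coeff_0_iff)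
  with degree_pderiv_le[of H] have "k + 1 < L" using deg k_def \<open>0 < L\<close> by linarith
  \<comment> \<open>reading the degree identity modulo m gives m | L - k - 1, yet 0 < L - k - 1 < m\<close>
  have "int ((m - 1) * L + k) = int (d * m + (m - 1))" using degs by (rule arg_cong)
  then have "(int m - 1) * int L + int k = int d * int m + (int m - 1)"
    using \<open>L < m\<close> by simp
  then have "int m * (int L - int d - 1) = int L - int k - 1" by (simp add: algebra_simps)
  then have "int m \<le> int L - int k - 1"
    using \<open>k + 1 < L\<close> by (intro zdvd_imp_le) (metis dvd_triv_left, linarith)
  with \<open>L < m\<close> show False by linarith
qed

lemma degree_pos_if_monic_original: "monic P \<Longrightarrow> original P \<Longrightarrow> degree P > 0"
  unfolding monic_def original_def by (metis gr0I one_neq_zero poly_0_coeff_0)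

lemma monic_pcompose:
  "monic G \<Longrightarrow> monic H \<Longrightarrow> degree H > 0 \<Longrightarrow> monic (pcompose G (H::'a::idom poly))"
  by (simp add: monic_def lead_coeff_comp)

lemma original_pcompose: "original G \<Longrightarrow> original H \<Longrightarrow> original (pcompose G H)"
  by (simp add: original_def poly_pcompose)

lemma monic_power: "monic P \<Longrightarrow> monic (P ^ n :: 'a::idom poly)"
  by (simp add: monic_def lead_coeff_power)

lemma monic_power_char_power_iff:
  "CHAR('a) > 0 \<Longrightarrow> monic (P ^ (CHAR('a) ^ k) :: 'a::idom poly) \<longleftrightarrow> monic P"
  using power_char_power_eq_iff[of "lead_coeff P" k 1] by (simp add: monic_def lead_coeff_power)

lemma original_power_iff: "n > 0 \<Longrightarrow> original (P ^ n :: 'a::idom poly) \<longleftrightarrow> original P"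
  by (simp add: original_def)

lemma pderiv_pcompose_eq_0_iff:
  fixes g h gs hs :: "'a::idom poly"
  assumes "CHAR('a) > 0" "coprime (degree h) (degree hs)" "degree h > 0" "degree hs > 0"
    and comp: "pcompose g h = pcompose gs hs"
  shows "pderiv (pcompose g h) = 0 \<longleftrightarrow> pderiv g * pderiv gs = 0"
proof -
  have chain: "pderiv (pcompose g h) = pcompose (pderiv g) h * pderiv h"
    "pderiv (pcompose g h) = pcompose (pderiv gs) hs * pderiv hs"
    by (rule pderiv_pcompose, unfold comp, rule pderiv_pcompose)
  show ?thesis
  proof
    assume "pderiv (pcompose g h) = 0"
    show "pderiv g * pderiv gs = 0"
    proof (rule ccontr)
      assume "pderiv g * pderiv gs \<noteq> 0"
      then have "pcompose (pderiv g) h \<noteq> 0" "pcompose (pderiv gs) hs \<noteq> 0"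
        using assms(3,4) pcompose_eq_0 by auto
      with chain \<open>pderiv (pcompose g h) = 0\<close> have "pderiv h = 0" "pderiv hs = 0" by auto
      then have "CHAR('a) dvd degree h" "CHAR('a) dvd degree hs"
        by (simp_all add: char_dvd_degree_if_pderiv_eq_0)
      then show False
        using assms(2) prime_CHAR_semidom[OF assms(1)] coprime_common_divisor not_prime_unit
        by blast
    qed
  next
    assume "pderiv g * pderiv gs = 0"
    with chain show "pderiv (pcompose g h) = 0" by auto
  qed
qed

lemma data2_exists:
  fixes f g h gs hs :: "'a::field poly"
  assumes perfect: "perfect_char_p TYPE('a)"
    and mo: "monic g" "original g" "monic gs" "original gs" "monic hs" "original hs"
    and deg: "degree g = m" "degree hs = m" "degree gs = l"
    and comp: "f = pcompose g h" "f = pcompose gs hs"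
    and "pderiv g = 0" "pderiv gs \<noteq> 0"
  shows "\<exists>j M G Gs Hs. data2 CHAR('a) l m f g h gs hs j M G Gs Hs"
proof -
  note char_pos = perfect_char_pD(1)[OF perfect]
  obtain j G where G: "g = G ^ (CHAR('a) ^ j)" "pderiv G \<noteq> 0"
    using power_char_power_decomposition[OF perfect] degree_pos_if_monic_original mo by blast
  have "j > 0" using G \<open>pderiv g = 0\<close> by (cases j) auto
  have "pcompose gs hs = pcompose G h ^ (CHAR('a) ^ j)" using comp G by (simp add: pcompose_power)
  then obtain Gs Hs where Gs: "gs = phi CHAR('a) j Gs" and Hs: "hs = Hs ^ (CHAR('a) ^ j)"
      and GH: "pcompose Gs Hs = pcompose G h" "pderiv Gs \<noteq> 0"
    using pcompose_eq_power_char_power[OF perfect] degree_pos_if_monic_original mo \<open>pderiv gs \<noteq> 0\<close>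
    by metis
  define M where "M = degree G"
  have m: "m = CHAR('a) ^ j * M" using G deg by (simp add: degree_power M_def)
  moreover have "m = CHAR('a) ^ j * degree Hs" using Hs deg by (simp add: degree_power)
  ultimately have "degree Hs = M" using char_pos by simp
  have "M > 0" using m deg(1) degree_pos_if_monic_original[OF mo(1,2)] by (cases M) auto
  have "pcompose gs (xpow (CHAR('a) ^ j)) = pcompose (xpow (CHAR('a) ^ j)) Gs"
    using Gs power_char_power_eq_pcompose_phi[OF char_pos] by (simp add: pcompose_xpow)
  moreover have "monic G" "original G" "monic Hs" "original Hs" "monic Gs" "original Gs"
    using mo G Hs Gs char_pos
    by (simp_all add: monic_power_char_power_iff original_power_iff monic_phi_iff original_phi_iff)
  ultimately have "data2 CHAR('a) l m f g h gs hs j M G Gs Hs"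
    unfolding data2_def
    using \<open>j > 0\<close> \<open>M > 0\<close> m \<open>degree Hs = M\<close> M_def deg Gs G Hs GH comp char_pos
    by (simp add: pcompose_xpow degree_phi pcompose_power)
  then show ?thesis by blast
qed

lemma data3_exists:
  fixes f g h gs hs :: "'a::field poly"
  assumes perfect: "perfect_char_p TYPE('a)"
    and mo: "monic g" "original g" "monic h" "original h" "monic gs" "original gs"
    and deg: "degree g = m" "degree hs = m" "degree h = l" "degree gs = l" "l < m"
    and comp: "f = pcompose g h" "f = pcompose gs hs"
    and "pderiv gs = 0" "pderiv g \<noteq> 0" "\<not> CHAR('a) dvd m"
  shows "\<exists>e L G H Gs. data3 CHAR('a) l m f g h gs hs e L G H Gs"
proof -
  note char_pos = perfect_char_pD(1)[OF perfect]
  obtain e Gs where Gs: "gs = Gs ^ (CHAR('a) ^ e)" "pderiv Gs \<noteq> 0"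
    using power_char_power_decomposition[OF perfect] degree_pos_if_monic_original mo by blast
  have "e > 0" using Gs \<open>pderiv gs = 0\<close> by (cases e) auto
  have "pcompose g h = pcompose Gs hs ^ (CHAR('a) ^ e)" using comp Gs by (simp add: pcompose_power)
  then obtain G H where G: "g = phi CHAR('a) e G" and H: "h = H ^ (CHAR('a) ^ e)"
      and GH: "pcompose G H = pcompose Gs hs" "pderiv G \<noteq> 0"
    using pcompose_eq_power_char_power[OF perfect] degree_pos_if_monic_original mo \<open>pderiv g \<noteq> 0\<close>
    by metis
  define L where "L = degree H"
  have l: "l = CHAR('a) ^ e * L" using H deg by (simp add: degree_power L_def)
  moreover have "l = CHAR('a) ^ e * degree Gs" using Gs deg by (simp add: degree_power)
  ultimately have "degree Gs = L" using char_pos by simp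
  have "L > 0" using l deg(3) degree_pos_if_monic_original[OF mo(3,4)] by (cases L) auto
  have "L \<le> l" using l char_pos by simp
  have "degree G = m" using G deg char_pos by (simp add: degree_phi)
  then have "\<not> CHAR('a) dvd L"
    using not_char_dvd_degree_right_factor[OF GH(1)] deg \<open>L > 0\<close> \<open>L \<le> l\<close> \<open>pderiv Gs \<noteq> 0\<close>
      \<open>\<not> CHAR('a) dvd m\<close> L_def by simp
  moreover have "monic G" "original G" "monic H" "original H" "monic Gs" "original Gs"
    using mo G H Gs char_pos
    by (simp_all add: monic_power_char_power_iff original_power_iff monic_phi_iff original_phi_iff)
  ultimately have "data3 CHAR('a) l m f g h gs hs e L G H Gs"
    unfolding data3_def
    using \<open>e > 0\<close> \<open>L > 0\<close> l G H Gs GH comp char_pos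
    by (simp add: pcompose_xpow pcompose_power)
  then show ?thesis by blast
qed

lemma multiplicity_prime_power_mult:
  fixes p :: "'a::factorial_semiring"
  assumes "prime p" "\<not> p dvd L"
  shows "multiplicity p (p ^ e * L) = e"
proof -
  have "L \<noteq> 0" using assms(2) by auto
  with assms show ?thesis
    by (simp add: prime_elem_multiplicity_mult_distrib not_dvd_imp_multiplicity_0)
qed

lemma data2_unique:
  fixes f g h gs hs :: "'a::field poly"
  assumes "CHAR('a) > 0"
    and "data2 CHAR('a) l m f g h gs hs j M G Gs Hs"
    and "data2 CHAR('a) l m f g h gs hs j' M' G' Gs' Hs'"
  shows "j = j' \<and> M = M' \<and> G = G' \<and> Gs = Gs' \<and> Hs = Hs'"
proof -
  have "G ^ (CHAR('a) ^ j) = G' ^ (CHAR('a) ^ j')" "pderiv G \<noteq> 0" "pderiv G' \<noteq> 0"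
    using assms(2,3) by (auto simp: data2_def pcompose_xpow)
  then have "j = j'" "G = G'"
    using power_char_power_decomposition_unique[OF assms(1)] by blast+
  moreover have "Hs ^ (CHAR('a) ^ j) = Hs' ^ (CHAR('a) ^ j)"
    and "Gs ^ (CHAR('a) ^ j) = Gs' ^ (CHAR('a) ^ j)"
    using assms(2,3) \<open>j = j'\<close> by (auto simp: data2_def pcompose_xpow)
  then have "Hs = Hs'" "Gs = Gs'" using poly_power_char_power_eq_iff[OF assms(1)] by blast+
  moreover have "M = M'" using assms(2,3) \<open>G = G'\<close> by (simp add: data2_def)
  ultimately show ?thesis by blast
qed

lemma data3_unique:
  fixes f g h gs hs :: "'a::field poly"
  assumes "CHAR('a) > 0"
    and "data3 CHAR('a) l m f g h gs hs e L G H Gs"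
    and "data3 CHAR('a) l m f g h gs hs e' L' G' H' Gs'"
  shows "e = e' \<and> L = L' \<and> G = G' \<and> H = H' \<and> Gs = Gs'"
proof -
  have e_multiplicity: "e = multiplicity CHAR('a) l"
    if "data3 CHAR('a) l m f g h gs hs e L G H Gs" for e L G H Gs
    using that prime_CHAR_semidom[OF assms(1)]
    by (simp add: data3_def multiplicity_prime_power_mult)
  have "e = e'" using e_multiplicity[OF assms(2)] e_multiplicity[OF assms(3)] by simp
  moreover have "L = L'" using assms(1-3) \<open>e = e'\<close> by (simp add: data3_def)
  moreover have "G = G'"
    using assms(2,3) \<open>e = e'\<close> phi_eq_iff[OF assms(1)] by (simp add: data3_def)
  moreover have "H ^ (CHAR('a) ^ e) = H' ^ (CHAR('a) ^ e)"
    and "Gs ^ (CHAR('a) ^ e) = Gs' ^ (CHAR('a) ^ e)"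
    using assms(2,3) \<open>e = e'\<close> by (auto simp: data3_def pcompose_xpow)
  then have "H = H'" "Gs = Gs'" using poly_power_char_power_eq_iff[OF assms(1)] by blast+
  ultimately show ?thesis by blast
qed

lemma data2_converse:
  fixes G Gs Hs h :: "'a::field poly"
  assumes char_pos: "CHAR('a) > 0" and "j > 0" "M > 0"
    and mo: "monic G" "original G" "monic Gs" "original Gs" "monic Hs" "original Hs"
      "monic h" "original h"
    and deg: "degree G = M" "degree Hs = M" "degree Gs = l" "degree h = l"
    and "pderiv G * pderiv Gs \<noteq> 0" "pcompose G h = pcompose Gs Hs"
  shows "let m = CHAR('a) ^ j * M; g = pcompose (xpow (CHAR('a) ^ j)) G;
             hs = pcompose (xpow (CHAR('a) ^ j)) Hs;
             f = pcompose (xpow (CHAR('a) ^ j)) (pcompose G h) in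
         \<exists>gs. monic gs \<and> original gs \<and> degree gs = l \<and>
           pcompose gs (xpow (CHAR('a) ^ j)) = pcompose (xpow (CHAR('a) ^ j)) Gs \<and>
           monic g \<and> original g \<and> monic hs \<and> original hs \<and> monic f \<and> original f \<and>
           degree g = m \<and> degree hs = m \<and>
           f = pcompose g h \<and> f = pcompose gs hs \<and> pderiv g = 0 \<and>
           data2 CHAR('a) l m f g h gs hs j M G Gs Hs"
proof -
  have gs: "pcompose (phi CHAR('a) j Gs) (xpow (CHAR('a) ^ j)) = pcompose (xpow (CHAR('a) ^ j)) Gs"
    using power_char_power_eq_pcompose_phi[OF char_pos] by (simp add: pcompose_xpow)
  have f: "pcompose (phi CHAR('a) j Gs) (Hs ^ (CHAR('a) ^ j)) = pcompose Gs Hs ^ (CHAR('a) ^ j)"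
    using pcompose_phi_power[OF char_pos] .
  have "monic (pcompose G h)" "original (pcompose G h)"
    using mo by (simp_all add: monic_pcompose original_pcompose degree_pos_if_monic_original)
  with assms gs f show ?thesis
    unfolding Let_def
    by (intro exI[of _ "phi CHAR('a) j Gs"])
      (auto simp: data2_def pcompose_xpow pcompose_power monic_power original_power_iff
        monic_phi_iff original_phi_iff degree_phi degree_power pderiv_power_char_power)
qed

lemma data3_converse:
  fixes G H Gs hs :: "'a::field poly"
  assumes char_pos: "CHAR('a) > 0" and "e > 0" "L > 0" "\<not> CHAR('a) dvd L"
    and mo: "monic G" "original G" "monic H" "original H" "monic Gs" "original Gs"
      "monic hs" "original hs"
    and deg: "degree G = m" "degree hs = m" "degree H = L" "degree Gs = L"
    and "pderiv G * pderiv Gs \<noteq> 0" "pcompose G H = pcompose Gs hs"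
  shows "let l = CHAR('a) ^ e * L; g = phi CHAR('a) e G; h = pcompose (xpow (CHAR('a) ^ e)) H;
             gs = pcompose (xpow (CHAR('a) ^ e)) Gs;
             f = pcompose (xpow (CHAR('a) ^ e)) (pcompose G H) in
         monic g \<and> original g \<and> monic h \<and> original h \<and> monic gs \<and> original gs \<and>
         monic f \<and> original f \<and>
         degree g = m \<and> degree hs = m \<and> degree h = l \<and> degree gs = l \<and>
         f = pcompose g h \<and> f = pcompose gs hs \<and> pderiv gs = 0 \<and>
         data3 CHAR('a) l m f g h gs hs e L G H Gs"
proof -
  have f: "pcompose (phi CHAR('a) e G) (H ^ (CHAR('a) ^ e)) = pcompose G H ^ (CHAR('a) ^ e)"
    using pcompose_phi_power[OF char_pos] by simp
  have "monic (pcompose G H)" "original (pcompose G H)"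
    using mo by (simp_all add: monic_pcompose original_pcompose degree_pos_if_monic_original)
  with assms f show ?thesis
    by (auto simp: Let_def data3_def pcompose_xpow pcompose_power monic_power original_power_iff
        monic_phi_iff original_phi_iff degree_phi degree_power pderiv_power_char_power)
qed

theorem lemma4p13:
  fixes f g h gs hs :: "'a::field poly" and p l m :: nat
  assumes perfect: "perfect_char_p TYPE('a)"
    and charp: "p = CHAR('a)"
    and lm: "m > l" "l \<ge> 2" "coprime l m"
    and mo: "monic f" "original f" "monic g" "original g" "monic h" "original h"
            "monic gs" "original gs" "monic hs" "original hs"
    and deg: "degree g = m" "degree hs = m" "degree h = l" "degree gs = l"
    and comp: "f = pcompose g h" "f = pcompose gs hs"
  shows
  \<comment> \<open>(1)\<close>
  "((in_Fxp p f \<longleftrightarrow> pderiv f = 0) \<and> (pderiv f = 0 \<longleftrightarrow> pderiv g * pderiv gs = 0))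
   \<and>
  \<comment> \<open>(2)\<close>
   (pderiv g = 0 \<longrightarrow>
      \<not> p dvd l \<and> pderiv gs \<noteq> 0 \<and>
      (\<exists>j M G Gs Hs. data2 p l m f g h gs hs j M G Gs Hs \<and>
         (M > l \<longrightarrow> M > l \<and> l \<ge> 2 \<and> coprime l M \<and> degree G = M \<and> degree Hs = M \<and>
             degree h = l \<and> degree Gs = l \<and> pderiv G * pderiv Gs \<noteq> 0 \<and>
             pcompose G h = pcompose Gs Hs) \<and>
         (2 \<le> M \<and> M < l \<longrightarrow> l > M \<and> M \<ge> 2 \<and> coprime M l \<and> degree Gs = l \<and> degree h = l \<and>
             degree Hs = M \<and> degree G = M \<and> pderiv Gs * pderiv G \<noteq> 0 \<and>
             pcompose Gs Hs = pcompose G h) \<and>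
         (M = 1 \<longrightarrow> degree G = 1 \<and> degree Hs = 1)))
   \<and>
  \<comment> \<open>(3)\<close>
   (pderiv gs = 0 \<longrightarrow>
      \<not> p dvd m \<and> pderiv g \<noteq> 0 \<and>
      (\<exists>e L G H Gs. data3 p l m f g h gs hs e L G H Gs \<and>
         (L \<ge> 2 \<longrightarrow> m > L \<and> L \<ge> 2 \<and> coprime L m \<and> degree G = m \<and> degree hs = m \<and>
             degree H = L \<and> degree Gs = L \<and> pderiv G * pderiv Gs \<noteq> 0 \<and>
             pcompose G H = pcompose Gs hs)))
   \<and>
  \<comment> \<open>(4) uniqueness of the data of (2) and (3)\<close>
   (\<forall>j M G Gs Hs j' M' G' Gs' Hs'.
      data2 p l m f g h gs hs j M G Gs Hs \<and> data2 p l m f g h gs hs j' M' G' Gs' Hs' \<longrightarrow>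
      j = j' \<and> M = M' \<and> G = G' \<and> Gs = Gs' \<and> Hs = Hs')
   \<and>
   (\<forall>e L G H Gs e' L' G' H' Gs'.
      data3 p l m f g h gs hs e L G H Gs \<and> data3 p l m f g h gs hs e' L' G' H' Gs' \<longrightarrow>
      e = e' \<and> L = L' \<and> G = G' \<and> H = H' \<and> Gs = Gs')
   \<and>
  \<comment> \<open>(4) converse for (2)\<close>
   (\<forall>(l'::nat) (j::nat) (M::nat) (G::'a poly) Gs Hs h'.
      j > 0 \<and> M > 0 \<and> monic G \<and> original G \<and> monic Gs \<and> original Gs \<and>
      monic Hs \<and> original Hs \<and> monic h' \<and> original h' \<and>
      degree G = M \<and> degree Hs = M \<and> degree Gs = l' \<and> degree h' = l' \<and>
      pderiv G * pderiv Gs \<noteq> 0 \<and> pcompose G h' = pcompose Gs Hs \<longrightarrow>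
      (let m' = p ^ j * M; g' = pcompose (xpow (p ^ j)) G; hs' = pcompose (xpow (p ^ j)) Hs;
           f' = pcompose (xpow (p ^ j)) (pcompose G h') in
       \<exists>gs'. monic gs' \<and> original gs' \<and> degree gs' = l' \<and>
         pcompose gs' (xpow (p ^ j)) = pcompose (xpow (p ^ j)) Gs \<and>
         monic g' \<and> original g' \<and> monic hs' \<and> original hs' \<and> monic f' \<and> original f' \<and>
         degree g' = m' \<and> degree hs' = m' \<and>
         f' = pcompose g' h' \<and> f' = pcompose gs' hs' \<and> pderiv g' = 0 \<and>
         data2 p l' m' f' g' h' gs' hs' j M G Gs Hs))
   \<and>
  \<comment> \<open>(4) converse for (3)\<close>
   (\<forall>(m'::nat) (e::nat) (L::nat) (G::'a poly) H Gs hs'.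
      e > 0 \<and> L > 0 \<and> \<not> p dvd L \<and> monic G \<and> original G \<and> monic H \<and> original H \<and>
      monic Gs \<and> original Gs \<and> monic hs' \<and> original hs' \<and>
      degree G = m' \<and> degree hs' = m' \<and> degree H = L \<and> degree Gs = L \<and>
      pderiv G * pderiv Gs \<noteq> 0 \<and> pcompose G H = pcompose Gs hs' \<longrightarrow>
      (let l' = p ^ e * L; g' = phi p e G; h' = pcompose (xpow (p ^ e)) H;
           gs' = pcompose (xpow (p ^ e)) Gs; f' = pcompose (xpow (p ^ e)) (pcompose G H) in
       monic g' \<and> original g' \<and> monic h' \<and> original h' \<and> monic gs' \<and> original gs' \<and>
       monic f' \<and> original f' \<and>
       degree g' = m' \<and> degree hs' = m' \<and> degree h' = l' \<and> degree gs' = l' \<and>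
       f' = pcompose g' h' \<and> f' = pcompose gs' hs' \<and> pderiv gs' = 0 \<and>
       data3 p l' m' f' g' h' gs' hs' e L G H Gs))"
proof -
  have char_pos: "CHAR('a) > 0" using perfect by (rule perfect_char_pD)
  have not_both: "\<not> (CHAR('a) dvd l \<and> CHAR('a) dvd m)"
    using lm(3) prime_CHAR_semidom[OF char_pos] coprime_common_divisor not_prime_unit by blast
  have g_insep: "\<not> CHAR('a) dvd l \<and> pderiv gs \<noteq> 0" if "pderiv g = 0"
    using that char_dvd_degree_if_pderiv_eq_0[of g] char_dvd_degree_if_pderiv_eq_0[of gs]
      deg not_both by auto
  have gs_insep: "\<not> CHAR('a) dvd m \<and> pderiv g \<noteq> 0" if "pderiv gs = 0"
    using that char_dvd_degree_if_pderiv_eq_0[of gs] char_dvd_degree_if_pderiv_eq_0[of g]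
      deg not_both by auto
  show ?thesis
    unfolding charp
  proof (intro conjI impI)
    show "in_Fxp CHAR('a) f \<longleftrightarrow> pderiv f = 0" by (rule in_Fxp_iff_pderiv_eq_0[OF char_pos])
    have "pderiv (pcompose g h) = 0 \<longleftrightarrow> pderiv g * pderiv gs = 0"
      by (rule pderiv_pcompose_eq_0_iff[where gs = gs and hs = hs])
        (use char_pos deg lm comp in auto)
    with comp show "pderiv f = 0 \<longleftrightarrow> pderiv g * pderiv gs = 0" by simp
  next
    assume "pderiv g = 0"
    with g_insep show "\<not> CHAR('a) dvd l" "pderiv gs \<noteq> 0" by blast+
    then obtain j M G Gs Hs where D: "data2 CHAR('a) l m f g h gs hs j M G Gs Hs"
      using data2_exists[OF perfect mo(3,4,7-10) deg(1,2,4) comp \<open>pderiv g = 0\<close> \<open>pderiv gs \<noteq> 0\<close>]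
      by blast
    moreover have "coprime l M" using D lm(3) by (simp add: data2_def)
    moreover have "degree G = M" "degree Hs = M" "degree Gs = l" "pderiv G \<noteq> 0" "pderiv Gs \<noteq> 0"
      "pcompose G h = pcompose Gs Hs"
      using D by (simp_all add: data2_def)
    ultimately show "\<exists>j M G Gs Hs. data2 CHAR('a) l m f g h gs hs j M G Gs Hs \<and>
         (M > l \<longrightarrow> M > l \<and> l \<ge> 2 \<and> coprime l M \<and> degree G = M \<and> degree Hs = M \<and>
             degree h = l \<and> degree Gs = l \<and> pderiv G * pderiv Gs \<noteq> 0 \<and>
             pcompose G h = pcompose Gs Hs) \<and>
         (2 \<le> M \<and> M < l \<longrightarrow> l > M \<and> M \<ge> 2 \<and> coprime M l \<and> degree Gs = l \<and> degree h = l \<and>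
             degree Hs = M \<and> degree G = M \<and> pderiv Gs * pderiv G \<noteq> 0 \<and>
             pcompose Gs Hs = pcompose G h) \<and>
         (M = 1 \<longrightarrow> degree G = 1 \<and> degree Hs = 1)"
      using lm(2) deg(3) by (intro exI[of _ j] exI[of _ M] exI[of _ G] exI[of _ Gs] exI[of _ Hs])
        (simp add: coprime_commute)
  next
    assume "pderiv gs = 0"
    with gs_insep show "\<not> CHAR('a) dvd m" "pderiv g \<noteq> 0" by blast+
    then obtain e L G H Gs where D: "data3 CHAR('a) l m f g h gs hs e L G H Gs"
      using data3_exists[OF perfect mo(3-8) deg lm(1) comp \<open>pderiv gs = 0\<close> \<open>pderiv g \<noteq> 0\<close>
          \<open>\<not> CHAR('a) dvd m\<close>]
      by blast
    moreover have "coprime L m" "L \<le> l" using D lm(3) char_pos by (auto simp: data3_def)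
    moreover have "degree G = m" "degree H = L" "degree Gs = L" "pderiv G \<noteq> 0" "pderiv Gs \<noteq> 0"
      "pcompose G H = pcompose Gs hs"
      using D deg char_pos by (auto simp: data3_def degree_phi degree_power pcompose_xpow)
    ultimately show "\<exists>e L G H Gs. data3 CHAR('a) l m f g h gs hs e L G H Gs \<and>
         (L \<ge> 2 \<longrightarrow> m > L \<and> L \<ge> 2 \<and> coprime L m \<and> degree G = m \<and> degree hs = m \<and>
             degree H = L \<and> degree Gs = L \<and> pderiv G * pderiv Gs \<noteq> 0 \<and>
             pcompose G H = pcompose Gs hs)"
      using lm(1) deg(2)
      by (intro exI[of _ e] exI[of _ L] exI[of _ G] exI[of _ H] exI[of _ Gs]) simp
  qed (intro allI impI, elim conjE,
      rule data2_unique data3_unique data2_converse data3_converse, (rule char_pos | assumption)+)+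
qed

end
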